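(* Let $r\in\mathbb{N}$ with $r\ge2$, $v\in\mathbb{YF}^r$ and $u\in\mathbb{YF}$. Then $$\sum_{w\in S_r(u)} d_r(w,v)=r^{d(v)-d(u)}\, d_1(u,s(v)),$$ where $S_r(u)=\{w\in\mathbb{YF}^r: s(w)=u\}$.
   Context: Fix $r\in\mathbb{N}$. Words and statistics. Consider finite words over $\{1_1,\dots,1_r,2\}$. A letter $1_i$ is a one with digit value $1$; $2$ is a two with digit value $2$. $|x|$ is the sum of digit values, $d(x)$ the number of twos. The graph $\mathbb{YF}^r$. It is the graded graph on all finite words, graded by $|\cdot|$. From $x$ there is a downward edge to every word obtained by one of two operations: (i) delete the leftmost one; (ii) replace a $2$ lying left of the leftmost one (any $2$ if there are no ones) by $1_i$, with arbitrary $i$. $\mathbb{YF}=\mathbb{YF}^1$ (with $1:=1_1$), the Young–Fibonacci graph. $s:\mathbb{YF}^r\to\mathbb{YF}$ replaces every $1_i$ by $1$. Path counts. $d_r(x,y)$ is the number of downward paths $y=y_n\to\dots\to y_m=x$ in $\mathbb{YF}^r$ with $|y_i|=i$ ($0$ if none); $d_1$ is the count in $\mathbb{YF}$. *)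

theory Defs
  imports Complex_Main
begin

text \<open>Letters: One i stands for 1_i (digit value 1), Two for the letter 2 (digit value 2).\<close>
datatype letter = One nat | Two

type_synonym word = "letter list"

fun val :: "letter \<Rightarrow> nat" where
  "val (One i) = 1" | "val Two = 2"

definition wt :: "word \<Rightarrow> nat" where
  "wt x = sum_list (map val x)"

definition ntwos :: "word \<Rightarrow> nat" where
  "ntwos x = length (filter (\<lambda>a. a = Two) x)"

definition valid :: "nat \<Rightarrow> word \<Rightarrow> bool" where
  "valid r x \<longleftrightarrow> (\<forall>i. One i \<in> set x \<longrightarrow> 1 \<le> i \<and> i \<le> r)"

text \<open>Words reachable from x by one downward edge of YF^r.
 (i) delete the leftmost one; (ii) replace a 2 lying left of the leftmost one
 (i.e. in the initial run of twos) by 1_i, 1 <= i <= r.\<close>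
definition down :: "nat \<Rightarrow> word \<Rightarrow> word set" where
  "down r x =
     {xs @ ys | xs i ys. x = xs @ One i # ys \<and> set xs \<subseteq> {Two}}
   \<union> {x[j := One i] | j i. j < length x \<and> (\<forall>k\<le>j. x ! k = Two) \<and> 1 \<le> i \<and> i \<le> r}"

text \<open>d_r(x,y): number of downward paths y = y_n \<rightarrow> ... \<rightarrow> y_m = x in YF^r,
 represented as vertex lists starting at y and ending at x.\<close>
definition dpaths :: "nat \<Rightarrow> word \<Rightarrow> word \<Rightarrow> word list set" where
  "dpaths r x y = {ps. ps \<noteq> [] \<and> hd ps = y \<and> last ps = x \<and> (\<forall>w\<in>set ps. valid r w)
      \<and> (\<forall>k. Suc k < length ps \<longrightarrow> ps ! Suc k \<in> down r (ps ! k)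
                                 \<and> wt (ps ! Suc k) + 1 = wt (ps ! k))}"

definition dcount :: "nat \<Rightarrow> word \<Rightarrow> word \<Rightarrow> nat" where
  "dcount r x y = card (dpaths r x y)"

definition sproj :: "word \<Rightarrow> word" where
  "sproj x = map (\<lambda>a. case a of One i \<Rightarrow> One 1 | Two \<Rightarrow> Two) x"

definition Sfib :: "nat \<Rightarrow> word \<Rightarrow> word set" where
  "Sfib r u = {w. valid r w \<and> sproj w = u}"

end

theory Submission
  imports Defs
begin

(* A path counted by d_r(w, v) is either the trivial path w = v or starts with an edge v -> y,
   so d_r(w, v) = [w = v] + (sum over y below v of d_r(w, y)), and likewise in YF.
   The projection s maps the unique deletion edge of v (delete the leftmost one) to that of
   s(v) without changing the number of twos, while each replacement edge of s(v), turning a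
   two of the initial run of twos into 1, has exactly r lifts v[j := 1_i], each with one two
   fewer.  Hence sum_{y below v} r^d(y) g(s y) = r^d(v) sum_{z below s(v)} g(z), and
   induction on |v| gives r^d(u) sum_{w in S_r(u)} d_r(w, v) = r^d(v) d_1(u, s(v)). *)

definition proj_letter :: "letter \<Rightarrow> letter" where
  "proj_letter a = (case a of One i \<Rightarrow> One 1 | Two \<Rightarrow> Two)"

lemma proj_letter_simps [simp]:
  "proj_letter (One i) = One 1" "proj_letter Two = Two"
  by (simp_all add: proj_letter_def)

lemma proj_letter_eq_Two_iff [simp]: "proj_letter a = Two \<longleftrightarrow> a = Two"
  by (cases a) simp_all

lemma sproj_eq_map: "sproj x = map proj_letter x"
  by (simp add: sproj_def proj_letter_def)

definition lead_twos :: "word \<Rightarrow> nat" where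
  "lead_twos x = length (takeWhile (\<lambda>a. a = Two) x)"

definition del_lead_one :: "word \<Rightarrow> word" where
  "del_lead_one x = take (lead_twos x) x @ drop (Suc (lead_twos x)) x"

lemma lead_twos_le_length: "lead_twos x \<le> length x"
  by (simp add: lead_twos_def length_takeWhile_le)

lemma nth_less_lead_twos:
  assumes "k < lead_twos x"
  shows "x ! k = Two"
proof -
  have "takeWhile (\<lambda>a. a = Two) x ! k \<in> set (takeWhile (\<lambda>a. a = Two) x)"
    using assms unfolding lead_twos_def by (rule nth_mem)
  then show ?thesis
    using assms unfolding lead_twos_def by (auto simp: takeWhile_nth dest: set_takeWhileD)
qed

lemma less_lead_twos_iff: "j < lead_twos x \<longleftrightarrow> j < length x \<and> (\<forall>k\<le>j. x ! k = Two)"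
proof
  assume "j < lead_twos x"
  then show "j < length x \<and> (\<forall>k\<le>j. x ! k = Two)"
    using lead_twos_le_length[of x] by (auto intro: nth_less_lead_twos)
next
  assume "j < length x \<and> (\<forall>k\<le>j. x ! k = Two)"
  then show "j < lead_twos x"
    using length_takeWhile_less_P_nth[of "Suc j" "\<lambda>a. a = Two" x] unfolding lead_twos_def
    by simp
qed

lemma lead_twos_append_One: "set xs \<subseteq> {Two} \<Longrightarrow> lead_twos (xs @ One i # ys) = length xs"
  unfolding lead_twos_def by (subst takeWhile_append2) auto

lemma decompose_lead_one:
  assumes "lead_twos x < length x"
  obtains i where "x = take (lead_twos x) x @ One i # drop (Suc (lead_twos x)) x"
    and "set (take (lead_twos x) x) \<subseteq> {Two}"
proof -
  have "x ! lead_twos x \<noteq> Two"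
    using nth_length_takeWhile assms unfolding lead_twos_def by blast
  then obtain i where "x ! lead_twos x = One i" by (cases "x ! lead_twos x") auto
  moreover have "take (lead_twos x) x = takeWhile (\<lambda>a. a = Two) x"
    unfolding lead_twos_def by (simp flip: takeWhile_eq_take)
  then have "set (take (lead_twos x) x) \<subseteq> {Two}"
    by (auto dest: set_takeWhileD)
  ultimately show ?thesis using that id_take_nth_drop[OF assms] by simp
qed

lemma down_eq:
  "down r x = (if lead_twos x < length x then {del_lead_one x} else {})
     \<union> (\<lambda>(j, i). x[j := One i]) ` ({..<lead_twos x} \<times> {1..r})"
proof -
  have "{xs @ ys | xs i ys. x = xs @ One i # ys \<and> set xs \<subseteq> {Two}}
      = (if lead_twos x < length x then {del_lead_one x} else {})"
  proof (cases "lead_twos x < length x")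
    case True
    then obtain i where "x = take (lead_twos x) x @ One i # drop (Suc (lead_twos x)) x"
      and "set (take (lead_twos x) x) \<subseteq> {Two}" by (rule decompose_lead_one)
    then show ?thesis using True
      by (auto simp: del_lead_one_def lead_twos_append_One)
  next
    case False
    then show ?thesis by (auto simp: lead_twos_append_One)
  qed
  moreover have "{x[j := One i] | j i. j < length x \<and> (\<forall>k\<le>j. x ! k = Two) \<and> 1 \<le> i \<and> i \<le> r}
      = (\<lambda>(j, i). x[j := One i]) ` ({..<lead_twos x} \<times> {1..r})"
    by (auto simp: less_lead_twos_iff; blast)
  ultimately show ?thesis unfolding down_def by simp
qed

lemma length_del_lead_one: "lead_twos x < length x \<Longrightarrow> Suc (length (del_lead_one x)) = length x"
  by (simp add: del_lead_one_def)

lemma list_update_One_inject: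
  assumes "x[j := One i] = x[j' := One i']" "j < length x" "x ! j = Two"
  shows "j = j' \<and> i = i'"
proof -
  have "One i = x[j' := One i'] ! j"
    using assms by (metis nth_list_update_eq)
  then show ?thesis
    using assms(2,3) by (cases "j = j'") auto
qed

lemma inj_on_update_lead_twos: "inj_on (\<lambda>(j, i). x[j := One i]) ({..<lead_twos x} \<times> A)"
  by (rule inj_onI) (auto dest: list_update_One_inject simp: less_lead_twos_iff)

lemma sum_down:
  "(\<Sum>y\<in>down r x. f y) = (if lead_twos x < length x then f (del_lead_one x) else 0)
     + (\<Sum>j<lead_twos x. \<Sum>i=1..r. f (x[j := One i]))"
proof -
  let ?U = "(\<lambda>(j, i). x[j := One i]) ` ({..<lead_twos x} \<times> {1..r})"
  have "del_lead_one x \<notin> ?U" if "lead_twos x < length x"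
  proof
    assume "del_lead_one x \<in> ?U"
    then have "length (del_lead_one x) = length x" by auto
    with length_del_lead_one[OF that] show False by simp
  qed
  then have "(if lead_twos x < length x then {del_lead_one x} else {}) \<inter> ?U = {}"
    by auto
  then have "(\<Sum>y\<in>down r x. f y)
      = (\<Sum>y\<in>(if lead_twos x < length x then {del_lead_one x} else {}). f y) + (\<Sum>y\<in>?U. f y)"
    unfolding down_eq by (intro sum.union_disjoint) auto
  also have "(\<Sum>y\<in>?U. f y) = (\<Sum>j<lead_twos x. \<Sum>i=1..r. f (x[j := One i]))"
    by (simp add: sum.reindex[OF inj_on_update_lead_twos] sum.cartesian_product prod.case_distrib)
  finally show ?thesis by simp
qed

lemma finite_down: "finite (down r x)"
  unfolding down_eq by simp

lemma lead_twos_sproj [simp]: "lead_twos (sproj x) = lead_twos x"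
  by (simp add: lead_twos_def sproj_eq_map takeWhile_map comp_def)

lemma del_lead_one_sproj: "del_lead_one (sproj x) = sproj (del_lead_one x)"
  by (simp add: del_lead_one_def) (simp add: sproj_eq_map take_map drop_map)

lemma length_sproj [simp]: "length (sproj x) = length x"
  by (simp add: sproj_def)

lemma sproj_update_One: "sproj (x[j := One i]) = (sproj x)[j := One 1]"
  by (simp add: sproj_eq_map map_update)

lemma ntwos_update_Two:
  "j < length x \<Longrightarrow> x ! j = Two \<Longrightarrow> ntwos x = Suc (ntwos (x[j := One i]))"
proof (induction x arbitrary: j)
  case (Cons a x)
  then show ?case by (cases j) (auto simp: ntwos_def)
qed simp

lemma ntwos_del_lead_one:
  assumes "lead_twos x < length x"
  shows "ntwos (del_lead_one x) = ntwos x"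
proof -
  obtain i where "x = take (lead_twos x) x @ One i # drop (Suc (lead_twos x)) x"
    using assms by (rule decompose_lead_one)
  then have "ntwos x = ntwos (take (lead_twos x) x @ One i # drop (Suc (lead_twos x)) x)"
    by (rule arg_cong)
  then show ?thesis
    by (simp add: del_lead_one_def ntwos_def)
qed

lemma sum_down_sproj:
  fixes g :: "word \<Rightarrow> nat"
  shows "(\<Sum>y\<in>down r x. r ^ ntwos y * g (sproj y)) = r ^ ntwos x * (\<Sum>z\<in>down 1 (sproj x). g z)"
proof -
  have lift: "(\<Sum>i=1..r. r ^ ntwos (x[j := One i]) * g (sproj (x[j := One i])))
      = r ^ ntwos x * g ((sproj x)[j := One 1])" if "j < lead_twos x" for j
  proof -
    have "j < length x" "x ! j = Two"
      using that less_lead_twos_iff by auto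
    then obtain n where n: "ntwos x = Suc n"
      using ntwos_update_Two by blast
    have "ntwos (x[j := One i]) = n" for i
      using ntwos_update_Two[OF \<open>j < length x\<close> \<open>x ! j = Two\<close>, of i] n by simp
    then show ?thesis
      by (simp add: sproj_update_One n)
  qed
  have replace: "(\<Sum>j<lead_twos x. \<Sum>i=1..r. r ^ ntwos (x[j := One i]) * g (sproj (x[j := One i])))
      = r ^ ntwos x * (\<Sum>j<lead_twos x. \<Sum>i=1..1. g ((sproj x)[j := One i]))" (is "?L = ?R")
  proof -
    have "?L = (\<Sum>j<lead_twos x. r ^ ntwos x * g ((sproj x)[j := One 1]))"
      using lift by (intro sum.cong) auto
    also have "\<dots> = ?R"
      by (simp add: sum_distrib_left)
    finally show ?thesis .
  qed
  have delete: "(if lead_twos x < length x then r ^ ntwos (del_lead_one x) * g (sproj (del_lead_one x)) else 0)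
      = r ^ ntwos x * (if lead_twos x < length x then g (del_lead_one (sproj x)) else 0)"
    by (simp add: ntwos_del_lead_one del_lead_one_sproj)
  show ?thesis
    unfolding sum_down[where r = r] sum_down[where r = 1] length_sproj lead_twos_sproj delete replace
    by (simp add: distrib_left)
qed

lemma downE:
  assumes "y \<in> down r x"
  obtains (delete) xs i ys where "x = xs @ One i # ys" "y = xs @ ys"
  | (replace) j i where "j < length x" "x ! j = Two" "1 \<le> i" "i \<le> r" "y = x[j := One i]"
  using assms unfolding down_def by blast

lemma wt_list_update: "j < length x \<Longrightarrow> wt (x[j := a]) + val (x ! j) = wt x + val a"
proof (induction x arbitrary: j)
  case (Cons b x)
  then show ?case by (cases j) (auto simp: wt_def)
qed simp

lemma wt_down: "y \<in> down r x \<Longrightarrow> wt y + 1 = wt x"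
  by (elim downE) (auto simp: wt_def dest: wt_list_update[where a = "One _"])

lemma valid_down: "valid r x \<Longrightarrow> y \<in> down r x \<Longrightarrow> valid r y"
  by (elim downE) (auto simp: valid_def dest: set_update_subset_insert[THEN subsetD])

lemma Nil_notin_dpaths [simp]: "[] \<notin> dpaths r w v"
  by (simp add: dpaths_def)

lemma in_dpathsE:
  assumes "ps \<in> dpaths r w v"
  obtains qs where "ps = v # qs" "valid r v"
  using assms unfolding dpaths_def by (cases ps) auto

lemma singleton_in_dpaths_iff: "[x] \<in> dpaths r w v \<longleftrightarrow> x = v \<and> w = v \<and> valid r v"
  by (auto simp: dpaths_def)

lemma Cons_Cons_in_dpaths_iff:
  "x # y # ps \<in> dpaths r w v \<longleftrightarrow> x = v \<and> valid r v \<and> y \<in> down r v \<and> y # ps \<in> dpaths r w y"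
  unfolding dpaths_def by (auto simp: All_less_Suc2 dest: wt_down)

lemma dpaths_unfold:
  assumes "valid r v"
  shows "dpaths r w v = (if w = v then {[v]} else {}) \<union> (\<Union>y\<in>down r v. (#) v ` dpaths r w y)"
proof (rule set_eqI)
  fix ps
  show "ps \<in> dpaths r w v \<longleftrightarrow> ps \<in> (if w = v then {[v]} else {}) \<union> (\<Union>y\<in>down r v. (#) v ` dpaths r w y)"
  proof (cases ps)
    case (Cons x qs)
    then show ?thesis
      using assms by (cases qs)
        (auto simp: singleton_in_dpaths_iff Cons_Cons_in_dpaths_iff elim: in_dpathsE)
  qed auto
qed

lemma finite_dpaths: "finite (dpaths r w v)"
proof (induction "wt v" arbitrary: v rule: less_induct)
  case less
  show ?case
  proof (cases "valid r v")
    case True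
    have "finite (dpaths r w y)" if "y \<in> down r v" for y
      using less.hyps[of y] wt_down[OF that] by simp
    then show ?thesis
      using True by (subst dpaths_unfold) (auto simp: finite_down)
  next
    case False
    then have "dpaths r w v = {}"
      by (auto elim: in_dpathsE)
    then show ?thesis by simp
  qed
qed

lemma dcount_unfold:
  assumes "valid r v"
  shows "dcount r w v = (if w = v then 1 else 0) + (\<Sum>y\<in>down r v. dcount r w y)"
proof -
  have "card (\<Union>y\<in>down r v. (#) v ` dpaths r w y) = (\<Sum>y\<in>down r v. card ((#) v ` dpaths r w y))"
    by (rule card_UN_disjoint) (auto simp: finite_down finite_dpaths elim: in_dpathsE)
  also have "\<dots> = (\<Sum>y\<in>down r v. dcount r w y)"
    by (simp add: dcount_def card_image)
  finally show ?thesis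
    unfolding dcount_def dpaths_unfold[OF assms]
    by (subst card_Un_disjoint) (auto simp: finite_down finite_dpaths)
qed

lemma finite_Sfib: "finite (Sfib r u)"
proof (rule finite_subset)
  have "a \<in> insert Two (One ` {1..r})" if "valid r w" "a \<in> set w" for w a
    using that by (cases a) (auto simp: valid_def)
  then show "Sfib r u \<subseteq> {w. set w \<subseteq> insert Two (One ` {1..r}) \<and> length w = length u}"
    by (auto simp: Sfib_def sproj_def)
  show "finite {w. set w \<subseteq> insert Two (One ` {1..r}) \<and> length w = length u}"
    by (rule finite_lists_length_eq) simp
qed

lemma ntwos_sproj [simp]: "ntwos (sproj x) = ntwos x"
  by (simp add: ntwos_def sproj_eq_map filter_map comp_def)

lemma valid_one_sproj: "valid 1 (sproj x)"
  unfolding valid_def sproj_def by (auto split: letter.splits)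

lemma fibre_sum_dcount:
  assumes "valid r v"
  shows "r ^ ntwos u * (\<Sum>w\<in>Sfib r u. dcount r w v) = r ^ ntwos v * dcount 1 u (sproj v)"
  using assms
proof (induction "wt v" arbitrary: v rule: less_induct)
  case less
  let ?S = "Sfib r u"
  have IH: "r ^ ntwos u * (\<Sum>w\<in>?S. dcount r w y) = r ^ ntwos y * dcount 1 u (sproj y)"
    if "y \<in> down r v" for y
    using less.hyps[OF _ valid_down[OF less.prems that]] wt_down[OF that] by simp
  have "(\<Sum>w\<in>?S. dcount r w v)
      = (\<Sum>w\<in>?S. if w = v then 1 else 0) + (\<Sum>w\<in>?S. \<Sum>y\<in>down r v. dcount r w y)"
    by (simp add: dcount_unfold[OF less.prems] sum.distrib)
  also have "(\<Sum>w\<in>?S. if w = v then 1 else 0) = (if sproj v = u then 1 else 0)"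
    using less.prems by (subst sum.delta[OF finite_Sfib]) (simp add: Sfib_def)
  also have "(\<Sum>w\<in>?S. \<Sum>y\<in>down r v. dcount r w y) = (\<Sum>y\<in>down r v. \<Sum>w\<in>?S. dcount r w y)"
    by (rule sum.swap)
  finally have "r ^ ntwos u * (\<Sum>w\<in>?S. dcount r w v) = r ^ ntwos u * (if sproj v = u then 1 else 0)
      + (\<Sum>y\<in>down r v. r ^ ntwos u * (\<Sum>w\<in>?S. dcount r w y))"
    by (simp add: distrib_left sum_distrib_left)
  also have "\<dots> = r ^ ntwos v * (if u = sproj v then 1 else 0)
      + (\<Sum>y\<in>down r v. r ^ ntwos y * dcount 1 u (sproj y))"
    using IH by auto
  also have "\<dots> = r ^ ntwos v * ((if u = sproj v then 1 else 0) + (\<Sum>z\<in>down 1 (sproj v). dcount 1 u z))"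
    by (simp add: sum_down_sproj distrib_left)
  also have "\<dots> = r ^ ntwos v * dcount 1 u (sproj v)"
    using dcount_unfold[OF valid_one_sproj[of v], where w = u] by simp
  finally show ?case .
qed

theorem mainTheorem8:
  fixes r :: nat and v u :: word
  assumes "r \<ge> 2" and "valid r v" and "valid 1 u"
  shows "(\<Sum>w\<in>Sfib r u. real (dcount r w v))
           = real r powi (int (ntwos v) - int (ntwos u)) * real (dcount 1 u (sproj v))"
proof -
  have "real r ^ ntwos u * (\<Sum>w\<in>Sfib r u. real (dcount r w v))
      = real r ^ ntwos v * real (dcount 1 u (sproj v))"
    using fibre_sum_dcount[OF assms(2), of u] by (metis of_nat_mult of_nat_power of_nat_sum)
  then have "(\<Sum>w\<in>Sfib r u. real (dcount r w v))
      = real r ^ ntwos v / real r ^ ntwos u * real (dcount 1 u (sproj v))"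
    using assms(1) by (simp add: eq_divide_eq mult.commute)
  also have "real r ^ ntwos v / real r ^ ntwos u = real r powi (int (ntwos v) - int (ntwos u))"
    using assms(1) by (simp add: power_int_diff)
  finally show ?thesis .
qed

end
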